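(* Let $f:\mathbb{R}^n\to\mathbb{R}$ be $r+1$ times continuously differentiable for some integer $r\ge1$, with $\nabla f$ Lipschitz continuous with constant $L$. Let $x^*$ satisfy $\nabla f(x^* )=0$, and suppose that $\nabla^2 f(x^* )$ has exactly $p$ negative eigenvalues, where $1\le p<n$, and at least one positive eigenvalue; let $\lambda_1>0$ be the largest eigenvalue of $\nabla^2 f(x^* )$. Let \[ 0<\alpha<\frac{4}{\lambda_1},\qquad \beta\in\Big(\max\big(-1+\tfrac{\alpha\lambda_1}{2},\,0\big),\,1\Big), \] and let \[ DG(x^*,x^* )=\begin{bmatrix}(1+\beta)I-\alpha\nabla^2 f(x^* ) & -\beta I\\ I & 0\end{bmatrix}\in\mathbb{R}^{2n\times 2n}. \] Then there exist matrices $\tilde V_s\in\mathbb{R}^{2n\times(2n-p)}$ and $\tilde V_u\in\mathbb{R}^{2n\times p}$ such that: (a) the $2n\times 2n$ matrix $\tilde V=[\tilde V_s\,|\,\tilde V_u]$ is nonsingular; (b) the column space of $\tilde V_s$ is invariant under $DG(x^*,x^* )$, and all eigenvalues of the restriction of $DG(x^*,x^* )$ to this subspace have magnitude less than or equal to $1$; (c) the column space of $\tilde V_u$ is invariant under $DG(x^*,x^* )$, and all eigenvalues of the restriction of $DG(x^*,x^* )$ to this subspace have magnitude greater than $1$.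
   Context: $DG(x^*,x^* )$ is the Jacobian at $(x^*,x^* )$ of the heavy-ball map $G(z_1,z_2)=(z_1-\alpha\nabla f(z_1)+\beta(z_1-z_2),\,z_1)$ on $\mathbb{R}^n\times\mathbb{R}^n$. Eigenvalues may be complex; "magnitude" means complex modulus. *)

theory Defs
  imports "HOL-Analysis.Analysis" "Jordan_Normal_Form.Jordan_Normal_Form"
begin

fun pd :: "'n::finite list \<Rightarrow> (real^'n \<Rightarrow> real) \<Rightarrow> real^'n \<Rightarrow> real" where
  "pd [] f = f"
| "pd (i # is) f = (\<lambda>x. deriv (\<lambda>t. pd is f (x + t *\<^sub>R axis i 1)) 0)"

definition Ck :: "nat \<Rightarrow> (real^'n::finite \<Rightarrow> real) \<Rightarrow> bool" where
  "Ck k f \<longleftrightarrow>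
     (\<forall>is. length is < k \<longrightarrow>
        (\<forall>x i. (\<lambda>t. pd is f (x + t *\<^sub>R axis i 1)) differentiable (at 0))) \<and>
     (\<forall>is. length is \<le> k \<longrightarrow> continuous_on UNIV (pd is f))"

definition grad :: "(real^'n::finite \<Rightarrow> real) \<Rightarrow> real^'n \<Rightarrow> real^'n" where
  "grad f x = (\<chi> i. pd [i] f x)"

definition hess :: "(real^'n::finite \<Rightarrow> real) \<Rightarrow> real^'n \<Rightarrow> real^'n^'n" where
  "hess f x = (\<chi> i j. pd [i, j] f x)"

text \<open>A fixed enumeration of the finite index type (any bijection; spectral data do
  not depend on the choice).\<close>
definition idx :: "nat \<Rightarrow> 'n::finite" where
  "idx = (SOME b. bij_betw b {..<CARD('n)} (UNIV::'n set))"

definition to_mat :: "real^'n::finite^'n \<Rightarrow> real mat" where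
  "to_mat A = mat CARD('n) CARD('n) (\<lambda>(i,j). A $ idx i $ idx j)"

definition neg_eig_count :: "real mat \<Rightarrow> nat" where
  "neg_eig_count H = (\<Sum>a\<in>{a. a < 0 \<and> poly (char_poly H) a = 0}. order a (char_poly H))"

definition DG :: "real \<Rightarrow> real \<Rightarrow> real mat \<Rightarrow> real mat" where
  "DG \<alpha> \<beta> H = (let n = dim_row H in
     four_block_mat ((1 + \<beta>) \<cdot>\<^sub>m 1\<^sub>m n - \<alpha> \<cdot>\<^sub>m H) ((- \<beta>) \<cdot>\<^sub>m 1\<^sub>m n) (1\<^sub>m n) (0\<^sub>m n n))"

definition hcat :: "'a mat \<Rightarrow> 'a mat \<Rightarrow> 'a mat" where
  "hcat A B = mat (dim_row A) (dim_col A + dim_col B)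
     (\<lambda>(i,j). if j < dim_col A then A $$ (i,j) else B $$ (i, j - dim_col A))"

definition col_space_invariant :: "real mat \<Rightarrow> real mat \<Rightarrow> bool" where
  "col_space_invariant A V \<longleftrightarrow>
     (\<forall>c \<in> carrier_vec (dim_col V). \<exists>d \<in> carrier_vec (dim_col V). A *\<^sub>v (V *\<^sub>v c) = V *\<^sub>v d)"

definition restr_eigenvalue :: "real mat \<Rightarrow> real mat \<Rightarrow> complex \<Rightarrow> bool" where
  "restr_eigenvalue A V \<mu> \<longleftrightarrow>
     (\<exists>c \<in> carrier_vec (dim_col V).
        let v = map_mat complex_of_real V *\<^sub>v c in
        v \<noteq> 0\<^sub>v (dim_row V) \<and> map_mat complex_of_real A *\<^sub>v v = \<mu> \<cdot>\<^sub>v v)"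

end

theory Submission
  imports Defs
begin

text \<open>The Hessian is symmetric (Schwarz), so it has an orthonormal eigenbasis \<open>U\<close> with
  eigenvalues \<open>\<lambda>\<^sub>1 \<ge> ... \<ge> \<lambda>\<^sub>n\<close>, exactly the last \<open>p\<close> of them negative. Conjugation by
  \<open>diag(U, U)\<close> decouples \<open>DG\<close> into \<open>n\<close> companion matrices of \<open>\<mu>\<^sup>2 - t\<^sub>k \<mu> + \<beta>\<close> with
  \<open>t\<^sub>k = 1 + \<beta> - \<alpha> \<lambda>\<^sub>k\<close>. For \<open>\<lambda>\<^sub>k \<ge> 0\<close> the bounds on \<open>\<alpha>\<close> and \<open>\<beta>\<close> give
  \<open>-(1 + \<beta>) < t\<^sub>k \<le> 1 + \<beta>\<close>, so both roots have modulus at most 1 (real roots lie in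
  \<open>[-1, 1]\<close>, complex ones have modulus \<open>sqrt \<beta>\<close>) and the whole block is stable. For
  \<open>\<lambda>\<^sub>k < 0\<close> we get \<open>t\<^sub>k > 1 + \<beta>\<close>, real roots \<open>0 < m\<^sub>k < 1 < M\<^sub>k\<close>, and the block splits into
  the stable \<open>m\<^sub>k\<close>- and the unstable \<open>M\<^sub>k\<close>-eigenvector.\<close>

section \<open>Symmetry of the Hessian\<close>

lemma pd_Cons_has_real_derivative:
  fixes f :: "real^'n::finite \<Rightarrow> real"
  assumes "Ck k f" "length is < k"
  shows "((\<lambda>s. pd is f (x + s *\<^sub>R axis i 1)) has_real_derivative pd (i # is) f (x + s *\<^sub>R axis i 1)) (at s)"
proof -
  let ?g = "\<lambda>t. pd is f ((x + s *\<^sub>R axis i 1) + t *\<^sub>R axis i 1)"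
  have "?g differentiable (at 0)" using assms unfolding Ck_def by blast
  hence "(?g has_real_derivative pd (i # is) f (x + s *\<^sub>R axis i 1)) (at 0)"
    using DERIV_deriv_iff_real_differentiable by force
  moreover have "?g = (\<lambda>t. pd is f (x + (t + s) *\<^sub>R axis i 1))"
    by (simp add: scaleR_add_left algebra_simps)
  ultimately show ?thesis
    using DERIV_shift[where f="\<lambda>s. pd is f (x + s *\<^sub>R axis i 1)" and x=0 and z=s] by simp
qed

lemma mixed_difference_mean_value:
  fixes f :: "real^'n::finite \<Rightarrow> real"
  assumes ck: "Ck k f" and k: "2 \<le> k" and h: "0 < h"
  obtains a b where "0 < a" "a < h" "0 < b" "b < h"
    "f (x + h *\<^sub>R axis i 1 + h *\<^sub>R axis j 1) - f (x + h *\<^sub>R axis i 1) - f (x + h *\<^sub>R axis j 1) + f x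
     = h * h * pd [j, i] f (x + a *\<^sub>R axis i 1 + b *\<^sub>R axis j 1)"
proof -
  let ?ei = "axis i (1::real)" and ?ej = "axis j (1::real)"
  define \<phi> where "\<phi> s = f (x + h *\<^sub>R ?ej + s *\<^sub>R ?ei) - f (x + s *\<^sub>R ?ei)" for s
  have "(\<phi> has_real_derivative (pd [i] f (x + h *\<^sub>R ?ej + s *\<^sub>R ?ei) - pd [i] f (x + s *\<^sub>R ?ei))) (at s)" for s
    unfolding \<phi>_def
    using pd_Cons_has_real_derivative[OF ck, of "[]" "x + h *\<^sub>R ?ej" i s]
      pd_Cons_has_real_derivative[OF ck, of "[]" x i s] k
    by (intro DERIV_diff) auto
  then obtain a where a: "0 < a" "a < h"
    "\<phi> h - \<phi> 0 = h * (pd [i] f (x + h *\<^sub>R ?ej + a *\<^sub>R ?ei) - pd [i] f (x + a *\<^sub>R ?ei))"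
    using MVT2[OF h, of \<phi> "\<lambda>s. pd [i] f (x + h *\<^sub>R ?ej + s *\<^sub>R ?ei) - pd [i] f (x + s *\<^sub>R ?ei)"]
    by auto
  define \<psi> where "\<psi> t = pd [i] f (x + a *\<^sub>R ?ei + t *\<^sub>R ?ej)" for t
  have "(\<psi> has_real_derivative pd [j, i] f (x + a *\<^sub>R ?ei + t *\<^sub>R ?ej)) (at t)" for t
    unfolding \<psi>_def using pd_Cons_has_real_derivative[OF ck, of "[i]" "x + a *\<^sub>R ?ei" j t] k by auto
  then obtain b where b: "0 < b" "b < h" "\<psi> h - \<psi> 0 = h * pd [j, i] f (x + a *\<^sub>R ?ei + b *\<^sub>R ?ej)"
    using MVT2[OF h, of \<psi> "\<lambda>t. pd [j, i] f (x + a *\<^sub>R ?ei + t *\<^sub>R ?ej)"] by auto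
  have "\<psi> h - \<psi> 0 = pd [i] f (x + h *\<^sub>R ?ej + a *\<^sub>R ?ei) - pd [i] f (x + a *\<^sub>R ?ei)"
    unfolding \<psi>_def by (simp add: add_ac)
  moreover have "\<phi> h - \<phi> 0 = f (x + h *\<^sub>R ?ei + h *\<^sub>R ?ej) - f (x + h *\<^sub>R ?ei) - f (x + h *\<^sub>R ?ej) + f x"
    unfolding \<phi>_def by (simp add: add_ac)
  ultimately have "f (x + h *\<^sub>R ?ei + h *\<^sub>R ?ej) - f (x + h *\<^sub>R ?ei) - f (x + h *\<^sub>R ?ej) + f x
      = h * h * pd [j, i] f (x + a *\<^sub>R ?ei + b *\<^sub>R ?ej)"
    using a(3) b(3) by (metis mult.assoc)
  with a b that show ?thesis by blast
qed

lemma continuous_on_UNIV_near_axes: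
  fixes g :: "real^'n::finite \<Rightarrow> real"
  assumes "continuous_on UNIV g" "0 < e"
  obtains h where "0 < h"
    "\<And>a b. 0 < a \<Longrightarrow> a < h \<Longrightarrow> 0 < b \<Longrightarrow> b < h \<Longrightarrow>
       \<bar>g (x + a *\<^sub>R axis i 1 + b *\<^sub>R axis j 1) - g x\<bar> < e"
proof -
  obtain d where d: "0 < d" "\<And>y. dist y x < d \<Longrightarrow> dist (g y) (g x) < e"
    using assms unfolding continuous_on_iff by (metis UNIV_I)
  show ?thesis
  proof (rule that[of "d / 2"])
    fix a b :: real assume ab: "0 < a" "a < d / 2" "0 < b" "b < d / 2"
    have "dist (x + a *\<^sub>R axis i 1 + b *\<^sub>R axis j 1) x \<le> norm (a *\<^sub>R axis i (1::real)) + norm (b *\<^sub>R axis j (1::real))"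
      unfolding dist_norm by (simp add: norm_triangle_ineq del: norm_scaleR)
    also have "\<dots> < d" using ab by simp
    finally show "\<bar>g (x + a *\<^sub>R axis i 1 + b *\<^sub>R axis j 1) - g x\<bar> < e"
      using d(2) by (simp add: dist_real_def)
  qed (use d in simp)
qed

text \<open>Schwarz's theorem: both second partial derivatives are limits of the same mixed
  difference quotient.\<close>

lemma pd_swap:
  fixes f :: "real^'n::finite \<Rightarrow> real"
  assumes ck: "Ck k f" and k: "2 \<le> k"
  shows "pd [i, j] f x = pd [j, i] f x"
proof -
  have cont: "continuous_on UNIV (pd [a, b] f)" for a b
  proof -
    have "length [a, b] \<le> k" using k by simp
    thus ?thesis using ck unfolding Ck_def by blast
  qed
  have "\<bar>pd [i, j] f x - pd [j, i] f x\<bar> < 2 * e" if e: "0 < e" for e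
  proof -
    obtain h1 where h1: "0 < h1" "\<And>a b. 0 < a \<Longrightarrow> a < h1 \<Longrightarrow> 0 < b \<Longrightarrow> b < h1 \<Longrightarrow>
        \<bar>pd [j, i] f (x + a *\<^sub>R axis i 1 + b *\<^sub>R axis j 1) - pd [j, i] f x\<bar> < e"
      using continuous_on_UNIV_near_axes[OF cont e] by blast
    obtain h2 where h2: "0 < h2" "\<And>a b. 0 < a \<Longrightarrow> a < h2 \<Longrightarrow> 0 < b \<Longrightarrow> b < h2 \<Longrightarrow>
        \<bar>pd [i, j] f (x + a *\<^sub>R axis j 1 + b *\<^sub>R axis i 1) - pd [i, j] f x\<bar> < e"
      using continuous_on_UNIV_near_axes[OF cont e] by blast
    define h where "h = min h1 h2"
    have h: "0 < h" using h1 h2 by (simp add: h_def)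
    obtain a b where ab: "0 < a" "a < h" "0 < b" "b < h"
      "f (x + h *\<^sub>R axis i 1 + h *\<^sub>R axis j 1) - f (x + h *\<^sub>R axis i 1) - f (x + h *\<^sub>R axis j 1) + f x
       = h * h * pd [j, i] f (x + a *\<^sub>R axis i 1 + b *\<^sub>R axis j 1)"
      using mixed_difference_mean_value[OF ck k h] by blast
    obtain a' b' where ab': "0 < a'" "a' < h" "0 < b'" "b' < h"
      "f (x + h *\<^sub>R axis j 1 + h *\<^sub>R axis i 1) - f (x + h *\<^sub>R axis j 1) - f (x + h *\<^sub>R axis i 1) + f x
       = h * h * pd [i, j] f (x + a' *\<^sub>R axis j 1 + b' *\<^sub>R axis i 1)"
      using mixed_difference_mean_value[OF ck k h] by blast
    have "pd [j, i] f (x + a *\<^sub>R axis i 1 + b *\<^sub>R axis j 1) = pd [i, j] f (x + a' *\<^sub>R axis j 1 + b' *\<^sub>R axis i 1)"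
      using ab(5) ab'(5) h by (simp add: algebra_simps)
    moreover have "\<bar>pd [j, i] f (x + a *\<^sub>R axis i 1 + b *\<^sub>R axis j 1) - pd [j, i] f x\<bar> < e"
      using h1(2) ab by (simp add: h_def)
    moreover have "\<bar>pd [i, j] f (x + a' *\<^sub>R axis j 1 + b' *\<^sub>R axis i 1) - pd [i, j] f x\<bar> < e"
      using h2(2) ab' by (simp add: h_def)
    ultimately show ?thesis by linarith
  qed
  from this[of "\<bar>pd [i, j] f x - pd [j, i] f x\<bar> / 2"] show ?thesis by fastforce
qed

lemma transpose_hess:
  assumes "Ck k f" "2 \<le> k"
  shows "transpose (hess f x) = hess f x"
  using pd_swap[OF assms] by (simp add: hess_def transpose_def vec_eq_iff)

section \<open>Spectral theorem for symmetric matrices\<close>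

lemma inner_mult_symmetric:
  fixes H :: "real^'n::finite^'n"
  assumes "transpose H = H"
  shows "inner x (H *v y) = inner (H *v x) y"
  by (metis assms dot_lmul_matrix vector_transpose_matrix)

lemma linear_le_quadratic_imp_zero:
  fixes a E :: real
  assumes "0 \<le> a" and le: "\<And>t. 2 * t * a \<le> t^2 * E"
  shows "a = 0"
proof (rule ccontr)
  assume "a \<noteq> 0"
  hence a: "0 < a" using assms(1) by simp
  define t where "t = a / (\<bar>E\<bar> + 1)"
  have t: "0 < t" using a by (simp add: t_def)
  have "2 * t * a \<le> t * (t * E)" using le[of t] by (simp add: power2_eq_square)
  hence "2 * a \<le> t * E" using t by simp
  also have "\<dots> \<le> t * \<bar>E\<bar>" using t by (simp add: mult_left_mono)
  also have "\<dots> < a" using a by (simp add: t_def field_simps)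
  finally show False using a by simp
qed

lemma rayleigh_max_eigenvector:
  fixes H :: "real^'n::finite^'n"
  assumes sym: "transpose H = H" and S: "subspace S" and inv: "\<And>x. x \<in> S \<Longrightarrow> H *v x \<in> S"
    and u: "u \<in> S" "norm u = 1"
    and max: "\<And>y. y \<in> S \<Longrightarrow> norm y = 1 \<Longrightarrow> inner y (H *v y) \<le> inner u (H *v u)"
  shows "H *v u = inner u (H *v u) *\<^sub>R u"
proof -
  define \<mu> where "\<mu> = inner u (H *v u)"
  have uu: "inner u u = 1" using u(2) by (simp add: power2_norm_eq_inner[symmetric])
  have homogeneous: "inner z (H *v z) \<le> \<mu> * inner z z" if "z \<in> S" for z
  proof (cases "z = 0")
    case False
    have "inner (z /\<^sub>R norm z) (H *v (z /\<^sub>R norm z)) \<le> \<mu>"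
      using max[of "z /\<^sub>R norm z"] S that False by (simp add: \<mu>_def subspace_scale)
    hence "inner z (H *v z) / (norm z)^2 \<le> \<mu>"
      by (simp add: matrix_vector_mult_scaleR power2_eq_square divide_inverse mult_ac)
    thus ?thesis using False by (simp add: divide_le_eq mult_ac power2_norm_eq_inner)
  qed simp
  define w where "w = H *v u - \<mu> *\<^sub>R u"
  have w: "w \<in> S" using S inv u by (simp add: w_def subspace_diff subspace_scale)
  have wu: "inner w u = 0"
    using uu by (simp add: w_def inner_diff_left inner_commute[of "H *v u" u] \<mu>_def)
  have "H *v u = w + \<mu> *\<^sub>R u" by (simp add: w_def)
  hence Hw: "inner w (H *v u) = inner w w" by (simp add: inner_add_right wu)
  have quadratic: "2 * t * inner w w \<le> t^2 * (\<mu> * inner w w - inner w (H *v w))" for t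
  proof -
    have "u + t *\<^sub>R w \<in> S" using S u w by (simp add: subspace_add subspace_scale)
    moreover have "inner u (H *v w) = inner w (H *v u)"
      using inner_mult_symmetric[OF sym, of u w] by (simp add: inner_commute)
    ultimately show ?thesis using homogeneous[of "u + t *\<^sub>R w"] Hw
      by (simp add: matrix_vector_right_distrib matrix_vector_mult_scaleR inner_add_left inner_add_right
          wu inner_commute[of u w] uu \<mu>_def[symmetric] algebra_simps power2_eq_square)
  qed
  have "inner w w = 0" by (rule linear_le_quadratic_imp_zero[OF inner_ge_zero quadratic])
  thus ?thesis by (simp add: w_def \<mu>_def)
qed

lemma exists_eigenvector_orthogonal:
  fixes H :: "real^'n::finite^'n" and u :: "nat \<Rightarrow> real^'n"
  assumes sym: "transpose H = H" and k: "k < CARD('n)"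
    and ev: "\<And>j. j < k \<Longrightarrow> H *v u j = lam j *\<^sub>R u j"
  obtains v \<mu> where "norm v = 1" "H *v v = \<mu> *\<^sub>R v" "\<And>i. i < k \<Longrightarrow> inner v (u i) = 0"
    "\<And>x. norm x = 1 \<Longrightarrow> (\<forall>i<k. inner x (u i) = 0) \<Longrightarrow> inner x (H *v x) \<le> \<mu>"
proof -
  define S where "S = {x. \<forall>i<k. inner x (u i) = 0}"
  have S: "subspace S" by (auto simp: S_def subspace_def inner_add_left)
  have inv: "H *v x \<in> S" if "x \<in> S" for x
    using that by (simp add: S_def ev inner_mult_symmetric[OF sym, symmetric])
  have "dim (u ` {..<k}) \<le> card (u ` {..<k})" by (rule dim_le_card) (auto intro: span_base)
  also have "\<dots> \<le> k" using card_image_le[of "{..<k}" u] by simp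
  finally have "dim (u ` {..<k}) < DIM(real^'n)" using k by simp
  then obtain x0 where x0: "x0 \<noteq> 0" "\<And>y. y \<in> span (u ` {..<k}) \<Longrightarrow> inner x0 y = 0"
    using orthogonal_to_subspace_exists unfolding Linear_Algebra.orthogonal_def by metis
  define C where "C = sphere 0 1 \<inter> S"
  have "S = (\<Inter>i<k. {x. inner (u i) x = 0})" by (auto simp: S_def inner_commute)
  hence "closed S" by (simp add: closed_INT closed_hyperplane)
  hence "compact C" unfolding C_def by (intro compact_Int_closed compact_sphere)
  moreover have "x0 /\<^sub>R norm x0 \<in> C" using x0 by (auto simp: C_def S_def intro: span_base)
  moreover have "continuous_on C (\<lambda>x. inner x (H *v x))"
    by (intro continuous_intros linear_continuous_on matrix_vector_mul_linear[THEN linear_conv_bounded_linear[THEN iffD1]])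
  ultimately obtain v where v: "v \<in> C" and max: "\<And>y. y \<in> C \<Longrightarrow> inner y (H *v y) \<le> inner v (H *v v)"
    using continuous_attains_sup[of C] by blast
  have "H *v v = inner v (H *v v) *\<^sub>R v"
    using v max by (intro rayleigh_max_eigenvector[OF sym S inv]) (auto simp: C_def)
  with v max show ?thesis by (intro that) (auto simp: C_def S_def)
qed

lemma orthonormal_eigenvectors_greedy:
  fixes H :: "real^'n::finite^'n"
  assumes sym: "transpose H = H" and kn: "k \<le> CARD('n)"
  shows "\<exists>u lam. (\<forall>j<k. norm (u j) = 1 \<and> H *v u j = lam j *\<^sub>R u j)
    \<and> (\<forall>i<k. \<forall>j<k. i \<noteq> j \<longrightarrow> inner (u i) (u j) = 0)
    \<and> (\<forall>j<k. \<forall>x. norm x = 1 \<longrightarrow> (\<forall>i<j. inner x (u i) = 0) \<longrightarrow> inner x (H *v x) \<le> lam j)"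
  using kn
proof (induction k)
  case (Suc k)
  then obtain u lam where IH: "\<forall>j<k. norm (u j) = 1 \<and> H *v u j = lam j *\<^sub>R u j"
    "\<forall>i<k. \<forall>j<k. i \<noteq> j \<longrightarrow> inner (u i) (u j) = 0"
    "\<forall>j<k. \<forall>x. norm x = 1 \<longrightarrow> (\<forall>i<j. inner x (u i) = 0) \<longrightarrow> inner x (H *v x) \<le> lam j"
    by auto
  obtain v \<mu> where v: "norm v = 1" "H *v v = \<mu> *\<^sub>R v" "\<And>i. i < k \<Longrightarrow> inner v (u i) = 0"
    "\<And>x. norm x = 1 \<Longrightarrow> (\<forall>i<k. inner x (u i) = 0) \<Longrightarrow> inner x (H *v x) \<le> \<mu>"
    using exists_eigenvector_orthogonal[OF sym, of k u lam] IH(1) Suc.prems by auto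
  show ?case
    by (rule exI[of _ "u(k := v)"], rule exI[of _ "lam(k := \<mu>)"])
      (use IH v in \<open>auto simp: less_Suc_eq inner_commute\<close>)
qed simp

lemma sorted_orthonormal_eigenbasis:
  fixes H :: "real^'n::finite^'n"
  assumes sym: "transpose H = H"
  obtains u lam where
    "\<And>i j. i < CARD('n) \<Longrightarrow> j < CARD('n) \<Longrightarrow> inner (u i) (u j) = (if i = j then 1 else 0)"
    "\<And>j. j < CARD('n) \<Longrightarrow> H *v u j = lam j *\<^sub>R u j"
    "\<And>i j. i \<le> j \<Longrightarrow> j < CARD('n) \<Longrightarrow> lam j \<le> lam i"
proof -
  obtain u lam where A: "\<forall>j<CARD('n). norm (u j) = 1 \<and> H *v u j = lam j *\<^sub>R u j"
    "\<forall>i<CARD('n). \<forall>j<CARD('n). i \<noteq> j \<longrightarrow> inner (u i) (u j) = 0"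
    "\<forall>j<CARD('n). \<forall>x. norm x = 1 \<longrightarrow> (\<forall>i<j. inner x (u i) = 0) \<longrightarrow> inner x (H *v x) \<le> lam j"
    using orthonormal_eigenvectors_greedy[OF sym order_refl] by blast
  have unit: "inner (u j) (u j) = 1" if "j < CARD('n)" for j
    using A(1) that by (simp add: power2_norm_eq_inner[symmetric])
  show ?thesis
  proof (rule that)
    show "inner (u i) (u j) = (if i = j then 1 else 0)" if "i < CARD('n)" "j < CARD('n)" for i j
      using A(2) unit that by auto
    show "lam j \<le> lam i" if "i \<le> j" "j < CARD('n)" for i j
      using A(3)[rule_format, of i "u j"] A(1,2) unit[of j] that by auto
  qed (use A(1) in auto)
qed

section \<open>Counting negative eigenvalues\<close>

lemma bij_betw_idx: "bij_betw (idx :: nat \<Rightarrow> 'n::finite) {..<CARD('n)} UNIV"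
proof -
  have "\<exists>b. bij_betw b {..<CARD('n)} (UNIV::'n set)"
    using ex_bij_betw_nat_finite[of "UNIV::'n set"] by (auto simp: atLeast0LessThan)
  thus ?thesis unfolding idx_def by (rule someI_ex)
qed

lemma sum_UNIV_idx: "(\<Sum>k\<in>UNIV. g k) = (\<Sum>i<CARD('n::finite). g (idx i :: 'n))"
  using sum.reindex_bij_betw[OF bij_betw_idx, of g] by simp

definition to_vec :: "real^'n::finite \<Rightarrow> real vec" where
  "to_vec x = vec CARD('n) (\<lambda>i. x $ idx i)"

lemma to_vec_carrier[simp]: "to_vec (x::real^'n::finite) \<in> carrier_vec CARD('n)"
  and dim_to_vec[simp]: "dim_vec (to_vec (x::real^'n::finite)) = CARD('n)"
  and index_to_vec[simp]: "i < CARD('n) \<Longrightarrow> to_vec x $ i = x $ idx i"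
  by (auto simp: to_vec_def)

lemma to_mat_carrier[simp]: "to_mat (A::real^'n::finite^'n) \<in> carrier_mat CARD('n) CARD('n)"
  and dim_to_mat[simp]: "dim_row (to_mat A) = CARD('n)" "dim_col (to_mat A) = CARD('n)"
  by (simp_all add: to_mat_def)

lemma to_mat_mult_to_vec: "to_mat (A::real^'n::finite^'n) *\<^sub>v to_vec x = to_vec (A *v x)"
proof (rule eq_vecI)
  fix i assume "i < dim_vec (to_vec (A *v x))"
  hence i: "i < CARD('n)" by simp
  have "(to_mat A *\<^sub>v to_vec x) $ i = (\<Sum>j<CARD('n). A $ idx i $ idx j * x $ idx j)"
    using i by (simp add: to_mat_def mult_mat_vec_def scalar_prod_def row_def atLeast0LessThan)
  also have "\<dots> = to_vec (A *v x) $ i"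
    using i by (simp add: matrix_vector_mult_def sum_UNIV_idx)
  finally show "(to_mat A *\<^sub>v to_vec x) $ i = to_vec (A *v x) $ i" .
qed simp

lemma scalar_prod_to_vec: "to_vec x \<bullet> to_vec (y::real^'n::finite) = inner x y"
  by (simp add: scalar_prod_def atLeast0LessThan inner_vec_def sum_UNIV_idx)

lemma to_vec_eq_0_iff: "to_vec (x::real^'n::finite) = 0\<^sub>v CARD('n) \<longleftrightarrow> x = 0"
proof
  assume "to_vec x = 0\<^sub>v CARD('n)"
  hence "inner x x = 0" using scalar_prod_to_vec[of x x] by simp
  thus "x = 0" by simp
qed (simp add: to_vec_def vec_eq_iff)

lemma to_vec_scaleR: "to_vec (c *\<^sub>R (x::real^'n::finite)) = c \<cdot>\<^sub>v to_vec x"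
  by (rule eq_vecI) (auto simp: to_vec_def)

lemma eigenvalue_to_mat:
  fixes H :: "real^'n::finite^'n"
  assumes "H *v v = \<mu> *\<^sub>R v" "v \<noteq> 0"
  shows "eigenvalue (to_mat H) \<mu>"
  unfolding eigenvalue_def eigenvector_def
  using assms to_mat_mult_to_vec[of H v] to_vec_eq_0_iff[of v]
  by (intro exI[of _ "to_vec v"]) (simp add: to_vec_scaleR)

definition cols_mat :: "(nat \<Rightarrow> real^'n::finite) \<Rightarrow> real mat" where
  "cols_mat u = mat CARD('n) CARD('n) (\<lambda>(i,j). u j $ idx i)"

lemma cols_mat_carrier[simp]: "cols_mat (u :: nat \<Rightarrow> real^'n::finite) \<in> carrier_mat CARD('n) CARD('n)"
  by (simp add: cols_mat_def)

lemma dim_cols_mat[simp]: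
  "dim_row (cols_mat (u :: nat \<Rightarrow> real^'n::finite)) = CARD('n)" "dim_col (cols_mat u) = CARD('n)"
  by (simp_all add: cols_mat_def)

lemma col_cols_mat: "j < CARD('n) \<Longrightarrow> col (cols_mat (u :: nat \<Rightarrow> real^'n::finite)) j = to_vec (u j)"
  by (auto simp: cols_mat_def to_vec_def col_def)

lemma cols_mat_orthogonal:
  fixes u :: "nat \<Rightarrow> real^'n::finite"
  assumes "\<And>i j. i < CARD('n) \<Longrightarrow> j < CARD('n) \<Longrightarrow> inner (u i) (u j) = (if i = j then 1 else 0)"
  shows "transpose_mat (cols_mat u) * cols_mat u = 1\<^sub>m CARD('n)"
proof (rule eq_matI)
  fix i j assume "i < dim_row (1\<^sub>m CARD('n))" "j < dim_col (1\<^sub>m CARD('n) :: real mat)"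
  hence ij: "i < CARD('n)" "j < CARD('n)" by auto
  hence "(transpose_mat (cols_mat u) * cols_mat u) $$ (i, j) = col (cols_mat u) i \<bullet> col (cols_mat u) j"
    by (simp add: cols_mat_def)
  thus "(transpose_mat (cols_mat u) * cols_mat u) $$ (i, j) = 1\<^sub>m CARD('n) $$ (i, j)"
    using ij by (simp add: col_cols_mat scalar_prod_to_vec assms)
qed (auto simp: cols_mat_def)

lemma to_mat_mult_cols_mat:
  fixes u :: "nat \<Rightarrow> real^'n::finite" and H :: "real^'n^'n"
  assumes "\<And>j. j < CARD('n) \<Longrightarrow> H *v u j = lam j *\<^sub>R u j"
  shows "to_mat H * cols_mat u = cols_mat u * mat_diag CARD('n) lam"
proof (rule eq_matI)
  fix i j assume "i < dim_row (cols_mat u * mat_diag CARD('n) lam)" "j < dim_col (cols_mat u * mat_diag CARD('n) lam)"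
  hence ij: "i < CARD('n)" "j < CARD('n)" by (auto simp: mat_diag_def)
  have "(to_mat H * cols_mat u) $$ (i, j) = (to_mat H *\<^sub>v col (cols_mat u) j) $ i"
    using ij by simp
  also have "\<dots> = u j $ idx i * lam j"
    using ij by (simp add: col_cols_mat to_mat_mult_to_vec assms)
  finally show "(to_mat H * cols_mat u) $$ (i, j) = (cols_mat u * mat_diag CARD('n) lam) $$ (i, j)"
    using ij by (simp add: mat_diag_mult_right[of _ "CARD('n)"] cols_mat_def)
qed (auto simp: mat_diag_def)

lemma char_poly_to_mat_eigenbasis:
  fixes u :: "nat \<Rightarrow> real^'n::finite" and H :: "real^'n^'n"
  assumes orth: "\<And>i j. i < CARD('n) \<Longrightarrow> j < CARD('n) \<Longrightarrow> inner (u i) (u j) = (if i = j then 1 else 0)"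
    and ev: "\<And>j. j < CARD('n) \<Longrightarrow> H *v u j = lam j *\<^sub>R u j"
  shows "char_poly (to_mat H) = (\<Prod>i<CARD('n). [:-lam i, 1:])"
proof -
  let ?n = "CARD('n)" let ?U = "cols_mat u" let ?D = "mat_diag ?n lam"
  have U: "?U \<in> carrier_mat ?n ?n" and Ut: "transpose_mat ?U \<in> carrier_mat ?n ?n" by auto
  have UtU: "transpose_mat ?U * ?U = 1\<^sub>m ?n" by (rule cols_mat_orthogonal[OF orth])
  hence UUt: "?U * transpose_mat ?U = 1\<^sub>m ?n" using mat_mult_left_right_inverse[OF Ut U] by blast
  have "to_mat H = to_mat H * (?U * transpose_mat ?U)" using UUt by simp
  also have "\<dots> = (to_mat H * ?U) * transpose_mat ?U" using assoc_mult_mat[OF to_mat_carrier U Ut] by simp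
  also have "\<dots> = ?U * ?D * transpose_mat ?U" by (simp add: to_mat_mult_cols_mat[OF ev])
  finally have eq: "to_mat H = ?U * ?D * transpose_mat ?U" .
  have "similar_mat (to_mat H) ?D" using U Ut by (intro similar_matI[OF _ UUt UtU eq]) auto
  hence "char_poly (to_mat H) = char_poly ?D" by (rule char_poly_similar)
  also have "\<dots> = (\<Prod>a\<leftarrow>diag_mat ?D. [:- a, 1:])"
    by (rule char_poly_upper_triangular[of _ ?n]) (auto simp: upper_triangular_def mat_diag_def)
  also have "diag_mat ?D = map lam [0..<?n]"
    by (auto simp: diag_mat_def mat_diag_def intro: nth_equalityI)
  also have "(\<Prod>a\<leftarrow>map lam [0..<?n]. [:- a, 1:]) = (\<Prod>i<?n. [:-lam i, 1:])"
    using prod.distinct_set_conv_list[of "[0..<?n]" "\<lambda>i. [:-lam i, 1:]"]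
    by (simp add: atLeast0LessThan o_def)
  finally show ?thesis .
qed

lemma order_prod_linear_factors:
  fixes lam :: "'i \<Rightarrow> real"
  assumes "finite I"
  shows "order a (\<Prod>i\<in>I. [:-lam i, 1:]) = card {i\<in>I. lam i = a}"
  using assms
proof (induction I rule: finite_induct)
  case (insert x F)
  have "(\<Prod>i\<in>F. [:-lam i, 1:]) \<noteq> 0" using insert.hyps(1) by (subst prod_zero_iff) auto
  hence "[:-lam x, 1:] * (\<Prod>i\<in>F. [:-lam i, 1:]) \<noteq> 0" by (intro no_zero_divisors) simp_all
  hence "order a (\<Prod>i\<in>insert x F. [:-lam i, 1:]) = order a [:-lam x, 1:] + order a (\<Prod>i\<in>F. [:-lam i, 1:])"
    unfolding prod.insert[OF insert.hyps] by (rule order_mult)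
  moreover have "order a [:-lam x, 1:] = (if lam x = a then 1 else 0)"
    using order_power_n_n[of a 1] order_0I[of "[:-lam x, 1:]" a] by auto
  moreover have "{i\<in>insert x F. lam i = a} = (if lam x = a then insert x {i\<in>F. lam i = a} else {i\<in>F. lam i = a})"
    by auto
  ultimately show ?case using insert.IH insert.hyps by simp
qed simp

lemma neg_eig_count_eigenbasis:
  fixes u :: "nat \<Rightarrow> real^'n::finite" and H :: "real^'n^'n"
  assumes "\<And>i j. i < CARD('n) \<Longrightarrow> j < CARD('n) \<Longrightarrow> inner (u i) (u j) = (if i = j then 1 else 0)"
    and "\<And>j. j < CARD('n) \<Longrightarrow> H *v u j = lam j *\<^sub>R u j"
  shows "neg_eig_count (to_mat H) = card {i. i < CARD('n) \<and> lam i < 0}"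
proof -
  let ?N = "{i. i < CARD('n) \<and> lam i < 0}" and ?P = "\<Prod>i<CARD('n). [:-lam i, 1:]"
  have roots: "{a. a < 0 \<and> poly ?P a = 0} = lam ` ?N"
    by (auto simp: poly_prod prod_zero_iff)
  have "(\<Sum>a\<in>lam ` ?N. order a ?P) = (\<Sum>a\<in>lam ` ?N. card {i \<in> ?N. lam i = a})"
    by (intro sum.cong refl) (auto simp: order_prod_linear_factors intro!: arg_cong[where f = card])
  also have "\<dots> = card ?N"
    using sum.image_gen[of ?N "\<lambda>_. 1::nat" lam] by simp
  moreover have "char_poly (to_mat H) = ?P" by (rule char_poly_to_mat_eigenbasis[OF assms])
  ultimately show ?thesis by (simp add: neg_eig_count_def roots)
qed

lemma antitone_neg_iff:
  fixes lam :: "nat \<Rightarrow> real"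
  assumes anti: "\<And>i j. i \<le> j \<Longrightarrow> j < n \<Longrightarrow> lam j \<le> lam i"
    and card: "card {i. i < n \<and> lam i < 0} = p" and j: "j < n"
  shows "lam j < 0 \<longleftrightarrow> n - p \<le> j"
proof
  assume "lam j < 0"
  hence "lam i < 0" if "i \<in> {j..<n}" for i using anti[of j i] that by force
  hence "{j..<n} \<subseteq> {i. i < n \<and> lam i < 0}" by auto
  from card_mono[OF _ this] show "n - p \<le> j" using card by simp
next
  assume "n - p \<le> j"
  show "lam j < 0"
  proof (rule ccontr)
    assume "\<not> lam j < 0"
    hence "Suc j \<le> i" if "i < n" "lam i < 0" for i
      using anti[of i j] j that by (cases "i \<le> j") auto
    hence "{i. i < n \<and> lam i < 0} \<subseteq> {Suc j..<n}" by auto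
    from card_mono[OF _ this] show False using card \<open>n - p \<le> j\<close> j by simp
  qed
qed

section \<open>Decoupled companion blocks\<close>

lemma sum_eq_single:
  assumes "finite S" "j0 \<in> S" "\<And>j. j \<in> S \<Longrightarrow> j \<noteq> j0 \<Longrightarrow> g j = 0"
  shows "sum g S = g j0"
proof -
  have "sum g S = g j0 + sum g (S - {j0})" using assms(1,2) by (rule sum.remove)
  also have "sum g (S - {j0}) = 0" using assms(3) by (intro sum.neutral) auto
  finally show ?thesis by simp
qed

text \<open>Coordinates of vectors of length \<open>2 * n\<close> are paired as \<open>(k, n + k)\<close> for \<open>k < n\<close>.
  On the pair \<open>k\<close>, \<open>companion_blocks n t \<beta>\<close> acts as the companion matrix
  \<open>[[t k, -\<beta>], [1, 0]]\<close> of \<open>\<mu>\<^sup>2 - t k * \<mu> + \<beta>\<close>. The columns of \<open>stable_basis n q m\<close>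
  span both coordinates of the pairs \<open>k < q\<close> and the vectors \<open>(m k, 1)\<close> in the pairs
  \<open>q \<le> k < n\<close>; those of \<open>unstable_basis n q M\<close> are the vectors \<open>(M k, 1)\<close>, \<open>q \<le> k < n\<close>.\<close>

definition companion_blocks :: "nat \<Rightarrow> (nat \<Rightarrow> real) \<Rightarrow> real \<Rightarrow> 'a::real_field mat" where
  "companion_blocks n t \<beta> = mat (2*n) (2*n) (\<lambda>(i,j).
     if i < n then (if j = i then of_real (t i) else if j = n + i then of_real (-\<beta>) else 0)
     else (if j = i - n then 1 else 0))"

definition stable_basis :: "nat \<Rightarrow> nat \<Rightarrow> (nat \<Rightarrow> real) \<Rightarrow> 'a::real_field mat" where
  "stable_basis n q m = mat (2*n) (n+q) (\<lambda>(i,j).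
     if i = j then (if j < q \<or> n \<le> j then 1 else of_real (m j))
     else if i = n + j \<and> q \<le> j \<and> j < n then 1 else 0)"

definition unstable_basis :: "nat \<Rightarrow> nat \<Rightarrow> (nat \<Rightarrow> real) \<Rightarrow> 'a::real_field mat" where
  "unstable_basis n q M = mat (2*n) (n - q) (\<lambda>(i,j).
     if i = q + j then of_real (M (q+j)) else if i = n + q + j then 1 else 0)"

lemma companion_blocks_carrier[simp]: "companion_blocks n t \<beta> \<in> carrier_mat (2*n) (2*n)"
  and dim_companion_blocks[simp]:
    "dim_row (companion_blocks n t \<beta>) = 2*n" "dim_col (companion_blocks n t \<beta>) = 2*n"
  by (simp_all add: companion_blocks_def)

lemma stable_basis_carrier[simp]: "stable_basis n q m \<in> carrier_mat (2*n) (n+q)"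
  and dim_stable_basis[simp]: "dim_row (stable_basis n q m) = 2*n" "dim_col (stable_basis n q m) = n+q"
  by (simp_all add: stable_basis_def)

lemma unstable_basis_carrier[simp]: "unstable_basis n q M \<in> carrier_mat (2*n) (n-q)"
  and dim_unstable_basis[simp]: "dim_row (unstable_basis n q M) = 2*n" "dim_col (unstable_basis n q M) = n-q"
  by (simp_all add: unstable_basis_def)

lemma map_mat_of_real_companion_blocks:
    "map_mat (of_real :: real \<Rightarrow> complex) (companion_blocks n t \<beta>) = companion_blocks n t \<beta>"
  and map_mat_of_real_stable_basis:
    "map_mat (of_real :: real \<Rightarrow> complex) (stable_basis n q m) = stable_basis n q m"
  and map_mat_of_real_unstable_basis:
    "map_mat (of_real :: real \<Rightarrow> complex) (unstable_basis n q M) = unstable_basis n q M"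
  by (rule eq_matI; auto simp: companion_blocks_def stable_basis_def unstable_basis_def)+

lemma index_mult_mat_vec_sum:
  "i < dim_row A \<Longrightarrow> dim_col A = m \<Longrightarrow> dim_vec c = m \<Longrightarrow> (A *\<^sub>v c) $ i = (\<Sum>j<m. A $$ (i,j) * c $ j)"
  by (simp add: scalar_prod_def row_def atLeast0LessThan)

lemma index_stable_basis_mult:
  fixes c :: "'a::real_field vec"
  assumes c: "c \<in> carrier_vec (n+q)" and q: "q \<le> n" and i: "i < 2*n"
  shows "(stable_basis n q m *\<^sub>v c) $ i = (if i < n then (if i < q then c$i else of_real (m i) * c$i)
      else if i < n+q then c$i else c$(i-n))"
proof -
  have e: "(stable_basis n q m *\<^sub>v c) $ i = (\<Sum>j<n+q. stable_basis n q m $$ (i,j) * c $ j)"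
    using c i by (intro index_mult_mat_vec_sum) auto
  show ?thesis
  proof (cases "i < n+q")
    case True
    have "(\<Sum>j<n+q. stable_basis n q m $$ (i,j) * c $ j) = stable_basis n q m $$ (i,i) * c $ i"
      using True i by (intro sum_eq_single) (auto simp: stable_basis_def)
    thus ?thesis using e True i by (auto simp: stable_basis_def)
  next
    case False
    have "(\<Sum>j<n+q. stable_basis n q m $$ (i,j) * c $ j) = stable_basis n q m $$ (i,i-n) * c $ (i-n)"
      using False i q by (intro sum_eq_single) (auto simp: stable_basis_def)
    thus ?thesis using e False i q by (auto simp: stable_basis_def)
  qed
qed

lemma index_unstable_basis_mult:
  fixes d :: "'a::real_field vec"
  assumes d: "d \<in> carrier_vec (n-q)" and q: "q \<le> n" and i: "i < 2*n"
  shows "(unstable_basis n q M *\<^sub>v d) $ i = (if q \<le> i \<and> i < n then of_real (M i) * d$(i-q)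
      else if n + q \<le> i then d$(i-n-q) else 0)"
proof -
  have e: "(unstable_basis n q M *\<^sub>v d) $ i = (\<Sum>j<n-q. unstable_basis n q M $$ (i,j) * d $ j)"
    using d i by (intro index_mult_mat_vec_sum) auto
  consider "q \<le> i \<and> i < n" | "n + q \<le> i" | "\<not> (q \<le> i \<and> i < n) \<and> \<not> n + q \<le> i" by blast
  thus ?thesis
  proof cases
    case 1
    have "(\<Sum>j<n-q. unstable_basis n q M $$ (i,j) * d $ j) = unstable_basis n q M $$ (i,i-q) * d $ (i-q)"
      using 1 i by (intro sum_eq_single) (auto simp: unstable_basis_def)
    thus ?thesis using e 1 i by (auto simp: unstable_basis_def)
  next
    case 2
    have "(\<Sum>j<n-q. unstable_basis n q M $$ (i,j) * d $ j) = unstable_basis n q M $$ (i,i-n-q) * d $ (i-n-q)"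
      using 2 i by (intro sum_eq_single) (auto simp: unstable_basis_def)
    thus ?thesis using e 2 i by (auto simp: unstable_basis_def)
  next
    case 3
    have "(\<Sum>j<n-q. unstable_basis n q M $$ (i,j) * d $ j) = 0"
      using 3 i by (intro sum.neutral) (auto simp: unstable_basis_def)
    thus ?thesis using e 3 i by auto
  qed
qed

lemma index_companion_blocks_mult:
  fixes v :: "'a::real_field vec"
  assumes v: "v \<in> carrier_vec (2*n)" and i: "i < 2*n"
  shows "(companion_blocks n t \<beta> *\<^sub>v v) $ i =
    (if i < n then of_real (t i) * v$i - of_real \<beta> * v$(n+i) else v$(i-n))"
proof -
  have e: "(companion_blocks n t \<beta> *\<^sub>v v) $ i = (\<Sum>j<2*n. companion_blocks n t \<beta> $$ (i,j) * v $ j)"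
    using v i by (intro index_mult_mat_vec_sum) auto
  show ?thesis
  proof (cases "i < n")
    case True
    have "(\<Sum>j<2*n. companion_blocks n t \<beta> $$ (i,j) * v $ j)
       = (\<Sum>j<2*n. (if j = i then of_real (t i) * v$i else 0) + (if j = n + i then - of_real \<beta> * v$(n+i) else 0))"
      using True by (intro sum.cong) (auto simp: companion_blocks_def)
    also have "\<dots> = of_real (t i) * v$i - of_real \<beta> * v$(n+i)"
      using True by (simp add: sum.distrib)
    finally show ?thesis using e True by simp
  next
    case False
    have "(\<Sum>j<2*n. companion_blocks n t \<beta> $$ (i,j) * v $ j) = companion_blocks n t \<beta> $$ (i,i-n) * v $ (i-n)"
      using False i by (intro sum_eq_single) (auto simp: companion_blocks_def)
    thus ?thesis using e False i by (auto simp: companion_blocks_def)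
  qed
qed

declare index_mult_mat_vec[simp del]

lemma stable_basis_mult_root_relation:
  fixes c :: "'a::real_field vec"
  assumes c: "c \<in> carrier_vec (n+q)" and q: "q \<le> n" and k: "q \<le> k" "k < n"
  shows "(stable_basis n q m *\<^sub>v c) $ k = of_real (m k) * (stable_basis n q m *\<^sub>v c) $ (n+k)"
  using k q by (simp add: index_stable_basis_mult[OF c q])

lemma in_stable_basis_range:
  fixes v :: "'a::real_field vec"
  assumes v: "v \<in> carrier_vec (2*n)" and q: "q \<le> n"
    and cond: "\<And>k. q \<le> k \<Longrightarrow> k < n \<Longrightarrow> v$k = of_real (m k) * v$(n+k)"
  shows "\<exists>c\<in>carrier_vec (n+q). v = stable_basis n q m *\<^sub>v c"
proof
  let ?c = "vec (n+q) (\<lambda>j. if j < q then v$j else if j < n then v$(n+j) else v$j)"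
  have c: "?c \<in> carrier_vec (n+q)" by simp
  show "v = stable_basis n q m *\<^sub>v ?c"
  proof (rule eq_vecI)
    fix i assume "i < dim_vec (stable_basis n q m *\<^sub>v ?c)"
    hence i: "i < 2*n" by simp
    show "v $ i = (stable_basis n q m *\<^sub>v ?c) $ i"
      using i q cond[of i] cond[of "i - n"] by (auto simp: index_stable_basis_mult[OF c q i])
  qed (use v in simp)
qed simp

lemma unstable_basis_mult_shape:
  fixes d :: "'a::real_field vec"
  assumes d: "d \<in> carrier_vec (n-q)" and q: "q \<le> n"
  shows "\<And>k. k < q \<Longrightarrow> (unstable_basis n q M *\<^sub>v d) $ k = 0"
    and "\<And>k. k < q \<Longrightarrow> (unstable_basis n q M *\<^sub>v d) $ (n+k) = 0"
    and "\<And>k. q \<le> k \<Longrightarrow> k < n \<Longrightarrow>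
      (unstable_basis n q M *\<^sub>v d) $ k = of_real (M k) * (unstable_basis n q M *\<^sub>v d) $ (n+k)"
  using q by (auto simp: index_unstable_basis_mult[OF d q])

lemma in_unstable_basis_range:
  fixes v :: "'a::real_field vec"
  assumes v: "v \<in> carrier_vec (2*n)" and q: "q \<le> n"
    and c0: "\<And>k. k < q \<Longrightarrow> v$k = 0" and c1: "\<And>k. k < q \<Longrightarrow> v$(n+k) = 0"
    and cond: "\<And>k. q \<le> k \<Longrightarrow> k < n \<Longrightarrow> v$k = of_real (M k) * v$(n+k)"
  shows "\<exists>d\<in>carrier_vec (n-q). v = unstable_basis n q M *\<^sub>v d"
proof
  let ?d = "vec (n-q) (\<lambda>j. v$(n+q+j))"
  have d: "?d \<in> carrier_vec (n-q)" by simp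
  show "v = unstable_basis n q M *\<^sub>v ?d"
  proof (rule eq_vecI)
    fix i assume "i < dim_vec (unstable_basis n q M *\<^sub>v ?d)"
    hence i: "i < 2*n" by simp
    show "v $ i = (unstable_basis n q M *\<^sub>v ?d) $ i"
      using i q cond[of i] c0[of i] c1[of "i - n"] by (auto simp: index_unstable_basis_mult[OF d q i])
  qed (use v in simp)
qed simp

lemma companion_blocks_preserves_root_relation:
  fixes v :: "'a::real_field vec"
  assumes v: "v \<in> carrier_vec (2*n)"
    and cond: "\<And>k. q \<le> k \<Longrightarrow> k < n \<Longrightarrow> v$k = of_real (m k) * v$(n+k)"
    and quad: "\<And>k. q \<le> k \<Longrightarrow> k < n \<Longrightarrow> (m k)^2 - t k * m k + \<beta> = 0"
    and k: "q \<le> k" "k < n"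
  shows "(companion_blocks n t \<beta> *\<^sub>v v)$k = of_real (m k) * (companion_blocks n t \<beta> *\<^sub>v v)$(n+k)"
proof -
  have q: "t k * m k - \<beta> = m k * m k" using quad[OF k] by (simp add: power2_eq_square)
  have "(companion_blocks n t \<beta> *\<^sub>v v)$k = of_real (t k) * v$k - of_real \<beta> * v$(n+k)"
    using k by (simp add: index_companion_blocks_mult[OF v])
  also have "\<dots> = of_real (t k * m k - \<beta>) * v$(n+k)"
    using cond[OF k] by (simp add: algebra_simps)
  also have "\<dots> = of_real (m k) * (of_real (m k) * v$(n+k))" unfolding q by (simp add: algebra_simps)
  also have "\<dots> = of_real (m k) * (companion_blocks n t \<beta> *\<^sub>v v)$(n+k)"
    using k cond[OF k] by (simp add: index_companion_blocks_mult[OF v])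
  finally show ?thesis .
qed

lemma companion_blocks_zero_block:
  fixes v :: "'a::real_field vec"
  assumes v: "v \<in> carrier_vec (2*n)" and k: "k < n" and z: "v$k = 0" "v$(n+k) = 0"
  shows "(companion_blocks n t \<beta> *\<^sub>v v)$k = 0" "(companion_blocks n t \<beta> *\<^sub>v v)$(n+k) = 0"
  using k z by (simp_all add: index_companion_blocks_mult[OF v])

lemma companion_blocks_eigenvector:
  fixes v :: "'a::real_field vec"
  assumes v: "v \<in> carrier_vec (2*n)" and nz: "v \<noteq> 0\<^sub>v (2*n)"
    and e: "companion_blocks n t \<beta> *\<^sub>v v = \<mu> \<cdot>\<^sub>v v"
  shows "\<exists>k<n. v$(n+k) \<noteq> 0 \<and> v$k = \<mu> * v$(n+k) \<and> \<mu>^2 - of_real (t k) * \<mu> + of_real \<beta> = 0"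
proof -
  have a: "v$k = \<mu> * v$(n+k)" if "k < n" for k
  proof -
    have "(companion_blocks n t \<beta> *\<^sub>v v)$(n+k) = v$k"
      using that by (simp add: index_companion_blocks_mult[OF v])
    moreover have "(companion_blocks n t \<beta> *\<^sub>v v)$(n+k) = \<mu> * v$(n+k)" using e v that by simp
    ultimately show ?thesis by simp
  qed
  have "\<exists>k<n. v$(n+k) \<noteq> 0"
  proof (rule ccontr)
    assume "\<not> ?thesis"
    hence z: "\<And>k. k < n \<Longrightarrow> v$(n+k) = 0" by auto
    have "v = 0\<^sub>v (2*n)"
    proof (rule eq_vecI)
      fix i assume "i < dim_vec (0\<^sub>v (2*n) :: 'a vec)"
      hence i: "i < 2*n" by simp
      show "v $ i = 0\<^sub>v (2*n) $ i"
      proof (cases "i < n")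
        case True thus ?thesis using a[OF True] z[OF True] i by simp
      next
        case False thus ?thesis using z[of "i - n"] i by simp
      qed
    qed (use v in simp)
    thus False using nz by simp
  qed
  then obtain k where k: "k < n" "v$(n+k) \<noteq> 0" by blast
  have "(companion_blocks n t \<beta> *\<^sub>v v)$k = of_real (t k) * v$k - of_real \<beta> * v$(n+k)"
    using k by (simp add: index_companion_blocks_mult[OF v])
  moreover have "(companion_blocks n t \<beta> *\<^sub>v v)$k = \<mu> * v$k" using e v k by simp
  ultimately have "(\<mu>^2 - of_real (t k) * \<mu> + of_real \<beta>) * v$(n+k) = 0"
    using a[OF k(1)] by (simp add: algebra_simps power2_eq_square)
  thus ?thesis using k a[OF k(1)] by auto
qed

lemma sum_lessThan_add: "(\<Sum>j<a+(b::nat). g j) = (\<Sum>j<a. g j) + (\<Sum>j<b. g (a+j))"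
  by (induction b) (auto simp: add_ac)

lemma index_hcat_mult:
  assumes A: "A \<in> carrier_mat m a" and B: "B \<in> carrier_mat m b" and x: "x \<in> carrier_vec (a+b)" and i: "i < m"
  shows "(hcat A B *\<^sub>v x) $ i = (A *\<^sub>v vec a (\<lambda>j. x$j)) $ i + (B *\<^sub>v vec b (\<lambda>j. x$(a+j))) $ i"
proof -
  have "(hcat A B *\<^sub>v x) $ i = (\<Sum>j<a+b. hcat A B $$ (i,j) * x $ j)"
    using A B x i by (intro index_mult_mat_vec_sum) (auto simp: hcat_def)
  also have "\<dots> = (\<Sum>j<a. A $$ (i,j) * x $ j) + (\<Sum>j<b. B $$ (i,j) * x $ (a+j))"
    unfolding sum_lessThan_add using A B i by (auto simp: hcat_def intro!: arg_cong2[where f="(+)"] sum.cong)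
  also have "\<dots> = (A *\<^sub>v vec a (\<lambda>j. x$j)) $ i + (B *\<^sub>v vec b (\<lambda>j. x$(a+j))) $ i"
    using A B i by (simp add: index_mult_mat_vec_sum[where m=a] index_mult_mat_vec_sum[where m=b] del: index_mult_mat_vec)
  finally show ?thesis .
qed

lemma hcat_stable_unstable_kernel:
  fixes x :: "real vec"
  assumes q: "q \<le> n" and x: "x \<in> carrier_vec (2*n)"
    and ne: "\<And>k. q \<le> k \<Longrightarrow> k < n \<Longrightarrow> M k \<noteq> m k"
    and z: "hcat (stable_basis n q m) (unstable_basis n q M) *\<^sub>v x = 0\<^sub>v (2*n)"
  shows "x = 0\<^sub>v (2*n)"
proof -
  define c :: "real vec" where "c = vec (n+q) (\<lambda>j. x$j)"
  define d :: "real vec" where "d = vec (n-q) (\<lambda>j. x$(n+q+j))"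
  have c: "c \<in> carrier_vec (n+q)" and d: "d \<in> carrier_vec (n-q)" by (auto simp: c_def d_def)
  have x': "x \<in> carrier_vec ((n+q)+(n-q))" using x q by (simp add: mult_2)
  have eq: "(stable_basis n q m *\<^sub>v c) $ i + (unstable_basis n q M *\<^sub>v d) $ i = 0" if i: "i < 2*n" for i
  proof -
    have "(hcat (stable_basis n q m) (unstable_basis n q M) *\<^sub>v x) $ i = 0" using z i by simp
    thus ?thesis
      using index_hcat_mult[OF stable_basis_carrier unstable_basis_carrier x' i] by (simp add: c_def d_def)
  qed
  have A: "c$k = 0 \<and> c$(n+k) = 0" if "k < q" for k
    using eq[of k] eq[of "n+k"] that q
    by (simp add: index_stable_basis_mult[OF c q] index_unstable_basis_mult[OF d q])
  have B: "c$k = 0 \<and> d$(k-q) = 0" if "q \<le> k" "k < n" for k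
  proof -
    have e1: "m k * c$k + M k * d$(k-q) = 0" using eq[of k] that
      by (simp add: index_stable_basis_mult[OF c q] index_unstable_basis_mult[OF d q])
    have e2: "c$k + d$(k-q) = 0" using eq[of "n+k"] that
      by (simp add: index_stable_basis_mult[OF c q] index_unstable_basis_mult[OF d q])
    have "c$k = - d$(k-q)" using e2 by simp
    hence "(M k - m k) * d$(k-q) = 0" using e1 by (simp add: algebra_simps)
    hence "d$(k-q) = 0" using ne[OF that] by simp
    thus ?thesis using e2 by simp
  qed
  have "x $ j = 0" if j: "j < 2*n" for j
  proof -
    consider "j < q" | "q \<le> j" "j < n" | "n \<le> j" "j < n + q" | "n + q \<le> j" by linarith
    thus ?thesis
    proof cases
      case 3 thus ?thesis using A[of "j - n"] by (simp add: c_def)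
    next
      case 4
      then obtain i where i: "j = n + q + i" by (metis le_add_diff_inverse)
      thus ?thesis using B[of "q + i"] j by (simp add: d_def)
    qed (use A B in \<open>simp_all add: c_def\<close>)
  qed
  thus ?thesis using x by (intro eq_vecI) auto
qed

lemma cmod_companion_root_le_1:
  fixes \<mu> :: complex and t \<beta> :: real
  assumes root: "\<mu>^2 - of_real t * \<mu> + of_real \<beta> = 0"
    and \<beta>: "0 < \<beta>" "\<beta> < 1" and t: "-(1+\<beta>) < t" "t \<le> 1+\<beta>"
  shows "cmod \<mu> \<le> 1"
proof -
  define x where "x = Re \<mu>"
  define y where "y = Im \<mu>"
  have re: "x^2 - y^2 - t * x + \<beta> = 0"
    using arg_cong[OF root, of Re] by (simp add: x_def y_def power2_eq_square)
  have im: "(2 * x - t) * y = 0"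
    using arg_cong[OF root, of Im] by (simp add: x_def y_def power2_eq_square algebra_simps)
  have "x^2 + y^2 \<le> 1"
  proof (cases "y = 0")
    case True
    text \<open>A real root lies in \<open>[-1, 1]\<close>: outside, the quadratic is positive.\<close>
    have "\<bar>x\<bar> \<le> 1"
    proof (rule ccontr)
      assume "\<not> \<bar>x\<bar> \<le> 1"
      hence "(\<bar>x\<bar> - 1) * (\<bar>x\<bar> - \<beta>) > 0" using \<beta> by simp
      moreover have "t * x \<le> (1 + \<beta>) * \<bar>x\<bar>"
      proof (cases "x \<ge> 0")
        case True thus ?thesis using t mult_right_mono[of t "1 + \<beta>" x] by simp
      next
        case False
        have "(t + (1 + \<beta>)) * x \<le> 0" using t False by (intro mult_nonneg_nonpos) auto
        thus ?thesis using False by (simp add: algebra_simps)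
      qed
      ultimately show False using re True by (simp add: algebra_simps power2_eq_square abs_mult_self_eq)
    qed
    thus ?thesis using True by (simp add: abs_square_le_1)
  next
    case False
    hence "t = 2 * x" using im by simp
    hence "x^2 + y^2 = \<beta>" using re by (simp add: power2_eq_square algebra_simps)
    thus ?thesis using \<beta> by simp
  qed
  thus ?thesis by (simp add: cmod_def x_def y_def)
qed

definition small_root :: "real \<Rightarrow> real \<Rightarrow> real" where
  "small_root t \<beta> = (t - sqrt (t^2 - 4*\<beta>)) / 2"

definition large_root :: "real \<Rightarrow> real \<Rightarrow> real" where
  "large_root t \<beta> = (t + sqrt (t^2 - 4*\<beta>)) / 2"

lemma small_large_root:
  assumes \<beta>: "0 < \<beta>" "\<beta> < 1" and t: "1 + \<beta> < t"
  shows "(small_root t \<beta>)^2 - t * small_root t \<beta> + \<beta> = 0"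
    and "(large_root t \<beta>)^2 - t * large_root t \<beta> + \<beta> = 0"
    and "0 < small_root t \<beta>" "small_root t \<beta> < 1" "1 < large_root t \<beta>"
proof -
  define s where "s = sqrt (t^2 - 4*\<beta>)"
  have disc: "(t - 2)^2 < t^2 - 4*\<beta>" using t by (simp add: power2_eq_square algebra_simps)
  hence s2: "s^2 = t^2 - 4*\<beta>"
    unfolding s_def by (intro real_sqrt_pow2) (meson le_less_trans zero_le_power2 less_imp_le)
  have "\<bar>t - 2\<bar> < s" unfolding s_def using real_sqrt_less_mono[OF disc] by simp
  moreover have "s < t"
    using real_sqrt_less_mono[of "t^2 - 4*\<beta>" "t^2"] \<beta> t by (simp add: s_def)
  ultimately show "0 < small_root t \<beta>" "small_root t \<beta> < 1" "1 < large_root t \<beta>"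
    unfolding small_root_def large_root_def s_def[symmetric] by auto
  show "(small_root t \<beta>)^2 - t * small_root t \<beta> + \<beta> = 0"
    and "(large_root t \<beta>)^2 - t * large_root t \<beta> + \<beta> = 0"
    unfolding small_root_def large_root_def s_def[symmetric] using s2
    by (simp_all add: power2_eq_square field_simps)
qed

lemma col_space_invariant_stable_basis:
  fixes t m :: "nat \<Rightarrow> real"
  assumes q: "q \<le> n" and root: "\<And>k. q \<le> k \<Longrightarrow> k < n \<Longrightarrow> (m k)^2 - t k * m k + \<beta> = 0"
  shows "col_space_invariant (companion_blocks n t \<beta>) (stable_basis n q m)"
  unfolding col_space_invariant_def
proof
  fix c :: "real vec" assume "c \<in> carrier_vec (dim_col (stable_basis n q m :: real mat))"
  hence c: "c \<in> carrier_vec (n+q)" by simp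
  let ?w = "stable_basis n q m *\<^sub>v c"
  have Kw: "companion_blocks n t \<beta> *\<^sub>v ?w \<in> carrier_vec (2*n)"
    by (intro mult_mat_vec_carrier[OF companion_blocks_carrier] mult_mat_vec_carrier[OF stable_basis_carrier c])
  have rel: "(companion_blocks n t \<beta> *\<^sub>v ?w) $ k = of_real (m k) * (companion_blocks n t \<beta> *\<^sub>v ?w) $ (n+k)"
    if "q \<le> k" "k < n" for k
    by (rule companion_blocks_preserves_root_relation[OF mult_mat_vec_carrier[OF stable_basis_carrier c]
          stable_basis_mult_root_relation[OF c q] root that])
  thus "\<exists>d\<in>carrier_vec (dim_col (stable_basis n q m)).
      companion_blocks n t \<beta> *\<^sub>v ?w = stable_basis n q m *\<^sub>v d"
    using in_stable_basis_range[OF Kw q rel] by simp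
qed

lemma col_space_invariant_unstable_basis:
  fixes t M :: "nat \<Rightarrow> real"
  assumes q: "q \<le> n" and root: "\<And>k. q \<le> k \<Longrightarrow> k < n \<Longrightarrow> (M k)^2 - t k * M k + \<beta> = 0"
  shows "col_space_invariant (companion_blocks n t \<beta>) (unstable_basis n q M)"
  unfolding col_space_invariant_def
proof
  fix d :: "real vec" assume "d \<in> carrier_vec (dim_col (unstable_basis n q M :: real mat))"
  hence d: "d \<in> carrier_vec (n-q)" by simp
  let ?w = "unstable_basis n q M *\<^sub>v d"
  note shape = unstable_basis_mult_shape[OF d q]
  have w: "?w \<in> carrier_vec (2*n)" by (rule mult_mat_vec_carrier[OF unstable_basis_carrier d])
  have "(companion_blocks n t \<beta> *\<^sub>v ?w) $ k = of_real (M k) * (companion_blocks n t \<beta> *\<^sub>v ?w) $ (n+k)"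
    if "q \<le> k" "k < n" for k
    by (rule companion_blocks_preserves_root_relation[OF w shape(3) root that])
  moreover have "(companion_blocks n t \<beta> *\<^sub>v ?w) $ k = 0" "(companion_blocks n t \<beta> *\<^sub>v ?w) $ (n+k) = 0"
    if "k < q" for k
    using companion_blocks_zero_block[OF w _ shape(1,2)[OF that]] that q by auto
  ultimately have "\<exists>d'\<in>carrier_vec (n-q). companion_blocks n t \<beta> *\<^sub>v ?w = unstable_basis n q M *\<^sub>v d'"
    by (intro in_unstable_basis_range[OF mult_mat_vec_carrier[OF companion_blocks_carrier w] q]) auto
  thus "\<exists>d'\<in>carrier_vec (dim_col (unstable_basis n q M)).
      companion_blocks n t \<beta> *\<^sub>v ?w = unstable_basis n q M *\<^sub>v d'"
    by simp
qed

lemma restr_eigenvalue_companion_blocks: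
  assumes "restr_eigenvalue (companion_blocks n t \<beta>) W \<mu>"
    and "map_mat of_real W = (W' :: complex mat)" "W' \<in> carrier_mat (2*n) k"
  obtains c where "c \<in> carrier_vec k" "W' *\<^sub>v c \<noteq> 0\<^sub>v (2*n)"
    "companion_blocks n t \<beta> *\<^sub>v (W' *\<^sub>v c) = \<mu> \<cdot>\<^sub>v (W' *\<^sub>v c)"
  using assms unfolding restr_eigenvalue_def Let_def map_mat_of_real_companion_blocks by auto

lemma cmod_restr_eigenvalue_stable_basis:
  fixes t m :: "nat \<Rightarrow> real"
  assumes q: "q \<le> n" and \<beta>: "0 < \<beta>" "\<beta> < 1"
    and t: "\<And>k. k < q \<Longrightarrow> -(1+\<beta>) < t k \<and> t k \<le> 1+\<beta>"
    and m: "\<And>k. q \<le> k \<Longrightarrow> k < n \<Longrightarrow> \<bar>m k\<bar> \<le> 1"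
    and ev: "restr_eigenvalue (companion_blocks n t \<beta>) (stable_basis n q m) \<mu>"
  shows "cmod \<mu> \<le> 1"
proof -
  obtain c where c: "c \<in> carrier_vec (n+q)" and "stable_basis n q m *\<^sub>v c \<noteq> 0\<^sub>v (2*n)"
    "companion_blocks n t \<beta> *\<^sub>v (stable_basis n q m *\<^sub>v c) = \<mu> \<cdot>\<^sub>v (stable_basis n q m *\<^sub>v c)"
    using restr_eigenvalue_companion_blocks[OF ev map_mat_of_real_stable_basis stable_basis_carrier] .
  from companion_blocks_eigenvector[OF mult_mat_vec_carrier[OF stable_basis_carrier c] this(2,3)]
  obtain k where k: "k < n" "(stable_basis n q m *\<^sub>v c) $ (n+k) \<noteq> 0"
    "(stable_basis n q m *\<^sub>v c) $ k = \<mu> * (stable_basis n q m *\<^sub>v c) $ (n+k)"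
    "\<mu>^2 - of_real (t k) * \<mu> + of_real \<beta> = 0" by auto
  show ?thesis
  proof (cases "q \<le> k")
    case True
    hence "\<mu> = of_real (m k)" using k stable_basis_mult_root_relation[OF c q True k(1)] by simp
    thus ?thesis using m[OF True k(1)] by simp
  next
    case False
    thus ?thesis using cmod_companion_root_le_1[OF k(4) \<beta>] t by simp
  qed
qed

lemma cmod_restr_eigenvalue_unstable_basis:
  fixes t M :: "nat \<Rightarrow> real"
  assumes q: "q \<le> n" and M: "\<And>k. q \<le> k \<Longrightarrow> k < n \<Longrightarrow> 1 < \<bar>M k\<bar>"
    and ev: "restr_eigenvalue (companion_blocks n t \<beta>) (unstable_basis n q M) \<mu>"
  shows "1 < cmod \<mu>"
proof -
  obtain d where d: "d \<in> carrier_vec (n-q)" and "unstable_basis n q M *\<^sub>v d \<noteq> 0\<^sub>v (2*n)"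
    "companion_blocks n t \<beta> *\<^sub>v (unstable_basis n q M *\<^sub>v d) = \<mu> \<cdot>\<^sub>v (unstable_basis n q M *\<^sub>v d)"
    using restr_eigenvalue_companion_blocks[OF ev map_mat_of_real_unstable_basis unstable_basis_carrier] .
  from companion_blocks_eigenvector[OF mult_mat_vec_carrier[OF unstable_basis_carrier d] this(2,3)]
  obtain k where k: "k < n" "(unstable_basis n q M *\<^sub>v d) $ (n+k) \<noteq> 0"
    "(unstable_basis n q M *\<^sub>v d) $ k = \<mu> * (unstable_basis n q M *\<^sub>v d) $ (n+k)" by auto
  note shape = unstable_basis_mult_shape[OF d q]
  have "q \<le> k" using shape(2) k(2) by (meson not_le)
  hence "\<mu> = of_real (M k)" using k shape(3)[of k] by simp
  thus ?thesis using M[OF \<open>q \<le> k\<close> k(1)] by simp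
qed

declare index_mult_mat_vec[simp]

lemma invertible_mat_iff_det:
  fixes A :: "'a::field mat"
  assumes A: "A \<in> carrier_mat n n"
  shows "invertible_mat A \<longleftrightarrow> det A \<noteq> 0"
proof
  assume "invertible_mat A"
  then obtain B where AB: "A * B = 1\<^sub>m n" and BA: "B * A = 1\<^sub>m (dim_row B)"
    using A unfolding invertible_mat_def inverts_mat_def by auto
  hence "B \<in> carrier_mat n n" using A by (metis carrier_matD carrier_matI index_mult_mat(2,3) index_one_mat(2,3))
  hence "det A * det B = 1" using det_mult[OF A] AB by (metis det_one)
  thus "det A \<noteq> 0" by auto
next
  assume "det A \<noteq> 0"
  from det_non_zero_imp_unit[OF A this, of undefined]
  obtain B where "B \<in> carrier_mat n n" "B * A = 1\<^sub>m n" "A * B = 1\<^sub>m n"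
    unfolding Units_def ring_mat_def by auto
  thus "invertible_mat A" unfolding invertible_mat_def inverts_mat_def using A by auto
qed

lemma invertible_hcat_stable_unstable:
  fixes m M :: "nat \<Rightarrow> real"
  assumes q: "q \<le> n" and ne: "\<And>k. q \<le> k \<Longrightarrow> k < n \<Longrightarrow> M k \<noteq> m k"
  shows "invertible_mat (hcat (stable_basis n q m) (unstable_basis n q M) :: real mat)"
proof -
  have "(hcat (stable_basis n q m) (unstable_basis n q M) :: real mat) \<in> carrier_mat (2*n) (2*n)"
    using q by (simp add: hcat_def mult_2)
  moreover have "v = 0\<^sub>v (2*n)"
    if "v \<in> carrier_vec (2*n)" "hcat (stable_basis n q m) (unstable_basis n q M) *\<^sub>v v = 0\<^sub>v (2*n)"
    for v :: "real vec"
    by (rule hcat_stable_unstable_kernel[OF q that(1)]) (use ne that in auto)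
  ultimately show ?thesis by (meson invertible_mat_iff_det det_0_iff_vec_prod_zero_field)
qed


section \<open>Stable and unstable splittings\<close>

definition stable_unstable_split :: "real mat \<Rightarrow> real mat \<Rightarrow> real mat \<Rightarrow> bool" where
  "stable_unstable_split A Vs Vu \<longleftrightarrow> invertible_mat (hcat Vs Vu) \<and>
     col_space_invariant A Vs \<and> (\<forall>\<mu>. restr_eigenvalue A Vs \<mu> \<longrightarrow> cmod \<mu> \<le> 1) \<and>
     col_space_invariant A Vu \<and> (\<forall>\<mu>. restr_eigenvalue A Vu \<mu> \<longrightarrow> cmod \<mu> > 1)"

lemma companion_blocks_split:
  fixes t :: "nat \<Rightarrow> real"
  assumes q: "q \<le> n" and \<beta>: "0 < \<beta>" "\<beta> < 1"
    and small: "\<And>k. k < q \<Longrightarrow> -(1+\<beta>) < t k \<and> t k \<le> 1+\<beta>"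
    and large: "\<And>k. q \<le> k \<Longrightarrow> k < n \<Longrightarrow> 1+\<beta> < t k"
  shows "stable_unstable_split (companion_blocks n t \<beta>)
    (stable_basis n q (\<lambda>k. small_root (t k) \<beta>)) (unstable_basis n q (\<lambda>k. large_root (t k) \<beta>))"
  unfolding stable_unstable_split_def
proof (intro conjI allI impI)
  note roots = small_large_root[OF \<beta> large]
  show "invertible_mat (hcat (stable_basis n q (\<lambda>k. small_root (t k) \<beta>))
      (unstable_basis n q (\<lambda>k. large_root (t k) \<beta>)) :: real mat)"
    using roots(4,5) by (intro invertible_hcat_stable_unstable[OF q]) (metis order.asym)
  show "col_space_invariant (companion_blocks n t \<beta>) (stable_basis n q (\<lambda>k. small_root (t k) \<beta>))"
    using roots(1) by (intro col_space_invariant_stable_basis[OF q])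
  show "col_space_invariant (companion_blocks n t \<beta>) (unstable_basis n q (\<lambda>k. large_root (t k) \<beta>))"
    using roots(2) by (intro col_space_invariant_unstable_basis[OF q])
  show "cmod \<mu> \<le> 1"
    if "restr_eigenvalue (companion_blocks n t \<beta>) (stable_basis n q (\<lambda>k. small_root (t k) \<beta>)) \<mu>" for \<mu>
  proof (rule cmod_restr_eigenvalue_stable_basis[OF q \<beta> small _ that])
    show "\<bar>small_root (t k) \<beta>\<bar> \<le> 1" if "q \<le> k" "k < n" for k using roots(3,4)[OF that] by simp
  qed
  show "1 < cmod \<mu>"
    if "restr_eigenvalue (companion_blocks n t \<beta>) (unstable_basis n q (\<lambda>k. large_root (t k) \<beta>)) \<mu>" for \<mu>
    using roots(5) by (intro cmod_restr_eigenvalue_unstable_basis[OF q _ that]) fastforce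
qed

lemma col_space_invariant_mult_left:
  fixes A T K W :: "real mat"
  assumes T: "T \<in> carrier_mat m m" and A: "A \<in> carrier_mat m m" and K: "K \<in> carrier_mat m m"
    and W: "W \<in> carrier_mat m k" and AT: "A * T = T * K" and inv: "col_space_invariant K W"
  shows "col_space_invariant A (T * W)"
  unfolding col_space_invariant_def
proof
  fix c :: "real vec" assume "c \<in> carrier_vec (dim_col (T * W))"
  hence c: "c \<in> carrier_vec k" using W by simp
  then obtain d where d: "d \<in> carrier_vec k" and Kd: "K *\<^sub>v (W *\<^sub>v c) = W *\<^sub>v d"
    using inv W unfolding col_space_invariant_def by auto
  have "A *\<^sub>v ((T * W) *\<^sub>v c) = (A * T) *\<^sub>v (W *\<^sub>v c)" using A T W c by simp
  also have "\<dots> = T *\<^sub>v (K *\<^sub>v (W *\<^sub>v c))" unfolding AT using T K W c by simp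
  also have "\<dots> = (T * W) *\<^sub>v d" unfolding Kd using T W d by simp
  finally show "\<exists>d\<in>carrier_vec (dim_col (T * W)). A *\<^sub>v ((T * W) *\<^sub>v c) = (T * W) *\<^sub>v d"
    using d W by auto
qed

lemma mult_mat_vec_zero:
  assumes "A \<in> carrier_mat m k"
  shows "A *\<^sub>v 0\<^sub>v k = (0\<^sub>v m :: 'a::semiring_0 vec)"
  using carrier_matD[OF assms] by (intro eq_vecI) (auto simp: scalar_prod_def)

lemma restr_eigenvalue_mult_left:
  fixes A T T' K W :: "real mat"
  assumes T: "T \<in> carrier_mat m m" "T' \<in> carrier_mat m m" "T' * T = 1\<^sub>m m"
    and A: "A \<in> carrier_mat m m" and K: "K \<in> carrier_mat m m"
    and W: "W \<in> carrier_mat m k" and AT: "A * T = T * K"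
    and ev: "restr_eigenvalue A (T * W) \<mu>"
  shows "restr_eigenvalue K W \<mu>"
proof -
  let ?c = "map_mat (of_real :: real \<Rightarrow> complex)"
  have Tc: "?c T \<in> carrier_mat m m" "?c T' \<in> carrier_mat m m" and Kc: "?c K \<in> carrier_mat m m"
    and Wc: "?c W \<in> carrier_mat m k" using T K W by auto
  obtain c where c: "c \<in> carrier_vec k" and nz: "?c (T * W) *\<^sub>v c \<noteq> 0\<^sub>v m"
    and e: "?c A *\<^sub>v (?c (T * W) *\<^sub>v c) = \<mu> \<cdot>\<^sub>v (?c (T * W) *\<^sub>v c)"
    using ev T W unfolding restr_eigenvalue_def Let_def by auto
  define w where "w = ?c W *\<^sub>v c"
  have w: "w \<in> carrier_vec m" using Wc c by (simp add: w_def)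
  have Tw: "?c (T * W) *\<^sub>v c = ?c T *\<^sub>v w"
    using T W c by (simp add: w_def of_real_hom.mat_hom_mult[OF T(1) W])
  have "?c T *\<^sub>v (?c K *\<^sub>v w) = ?c (A * T) *\<^sub>v w"
    using T K w by (simp add: AT of_real_hom.mat_hom_mult[OF T(1) K])
  also have "\<dots> = ?c T *\<^sub>v (\<mu> \<cdot>\<^sub>v w)"
    using A T w e by (simp add: of_real_hom.mat_hom_mult[OF A T(1)] Tw mult_mat_vec)
  finally have "?c T' *\<^sub>v (?c T *\<^sub>v (?c K *\<^sub>v w)) = ?c T' *\<^sub>v (?c T *\<^sub>v (\<mu> \<cdot>\<^sub>v w))" by simp
  moreover have "?c T' * ?c T = 1\<^sub>m m"
    by (metis of_real_hom.mat_hom_mult[OF T(2,1)] T(3) of_real_hom.mat_hom_one)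
  hence "?c T' *\<^sub>v (?c T *\<^sub>v x) = x" if "x \<in> carrier_vec m" for x
    using assoc_mult_mat_vec[OF Tc(2,1) that] that by simp
  ultimately have "?c K *\<^sub>v w = \<mu> \<cdot>\<^sub>v w" using Kc w by simp
  moreover have "w \<noteq> 0\<^sub>v m"
  proof
    assume "w = 0\<^sub>v m"
    moreover have "?c T *\<^sub>v 0\<^sub>v m = 0\<^sub>v m" by (rule mult_mat_vec_zero[OF Tc(1)])
    ultimately show False using nz Tw by simp
  qed
  ultimately show ?thesis unfolding restr_eigenvalue_def Let_def w_def using c W by auto
qed

lemma hcat_mult_left:
  fixes T A B :: "'a::semiring_1 mat"
  assumes T: "T \<in> carrier_mat m m" and A: "A \<in> carrier_mat m a" and B: "B \<in> carrier_mat m b"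
  shows "hcat (T * A) (T * B) = T * hcat A B"
proof (rule eq_matI)
  fix i j assume "i < dim_row (T * hcat A B)" "j < dim_col (T * hcat A B)"
  hence ij: "i < m" "j < a + b" using T A B by (auto simp: hcat_def)
  have "col (hcat A B) j = (if j < a then col A j else col B (j - a))"
    using A B ij by (auto simp: hcat_def col_def intro!: eq_vecI)
  thus "hcat (T * A) (T * B) $$ (i, j) = (T * hcat A B) $$ (i, j)"
    using ij T A B by (auto simp: hcat_def)
qed (use T A B in \<open>auto simp: hcat_def\<close>)

lemma stable_unstable_split_mult_left:
  fixes A T T' K Ws Wu :: "real mat"
  assumes T: "T \<in> carrier_mat m m" "T' \<in> carrier_mat m m" "T' * T = 1\<^sub>m m"
    and A: "A \<in> carrier_mat m m" and K: "K \<in> carrier_mat m m" and AT: "A * T = T * K"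
    and Ws: "Ws \<in> carrier_mat m a" and Wu: "Wu \<in> carrier_mat m b" and ab: "a + b = m"
    and split: "stable_unstable_split K Ws Wu"
  shows "stable_unstable_split A (T * Ws) (T * Wu)"
proof -
  have H: "hcat Ws Wu \<in> carrier_mat m m" using Ws Wu ab by (auto simp: hcat_def)
  have "det T \<noteq> 0" using det_mult[OF T(2,1)] T(3) by (metis det_one mult_zero_right zero_neq_one)
  moreover have "det (hcat Ws Wu) \<noteq> 0"
    using split H unfolding stable_unstable_split_def by (simp add: invertible_mat_iff_det)
  ultimately have "det (T * hcat Ws Wu) \<noteq> 0" by (simp add: det_mult[OF T(1) H])
  hence "invertible_mat (hcat (T * Ws) (T * Wu))"
    using H T(1) by (simp add: hcat_mult_left[OF T(1) Ws Wu] invertible_mat_iff_det[of _ m])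
  thus ?thesis
    using split restr_eigenvalue_mult_left[OF T A K _ AT] col_space_invariant_mult_left[OF T(1) A K _ AT] Ws Wu
    unfolding stable_unstable_split_def by blast
qed

lemma block_diag_left_inverse:
  fixes U U' :: "'a::semiring_1 mat"
  assumes U: "U \<in> carrier_mat n n" and U': "U' \<in> carrier_mat n n" and inv: "U' * U = 1\<^sub>m n"
  shows "four_block_mat U' (0\<^sub>m n n) (0\<^sub>m n n) U' * four_block_mat U (0\<^sub>m n n) (0\<^sub>m n n) U = 1\<^sub>m (n+n)"
  using U U' inv by (simp add: mult_four_block_mat[OF U' _ _ U' U _ _ U])


section \<open>The heavy-ball Jacobian\<close>

lemma DG_carrier: "H \<in> carrier_mat n n \<Longrightarrow> DG \<alpha> \<beta> H \<in> carrier_mat (2*n) (2*n)"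
  by (auto simp: DG_def mult_2)

lemma DG_mat_diag: "DG \<alpha> \<beta> (mat_diag n lam) = companion_blocks n (\<lambda>k. 1 + \<beta> - \<alpha> * lam k) \<beta>"
  by (rule eq_matI) (auto simp: DG_def mat_diag_def companion_blocks_def)

lemma DG_mult_block_diag:
  fixes H U D :: "real mat"
  assumes H: "H \<in> carrier_mat n n" and U: "U \<in> carrier_mat n n" and D: "D \<in> carrier_mat n n"
    and HU: "H * U = U * D"
  shows "DG \<alpha> \<beta> H * four_block_mat U (0\<^sub>m n n) (0\<^sub>m n n) U
       = four_block_mat U (0\<^sub>m n n) (0\<^sub>m n n) U * DG \<alpha> \<beta> D"
proof -
  let ?A = "(1 + \<beta>) \<cdot>\<^sub>m 1\<^sub>m n - \<alpha> \<cdot>\<^sub>m H" and ?B = "(1 + \<beta>) \<cdot>\<^sub>m 1\<^sub>m n - \<alpha> \<cdot>\<^sub>m D"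
  have one: "(1\<^sub>m n :: real mat) \<in> carrier_mat n n" and zero: "(0\<^sub>m n n :: real mat) \<in> carrier_mat n n"
    and b: "(- \<beta>) \<cdot>\<^sub>m 1\<^sub>m n \<in> carrier_mat n n" by auto
  have A: "?A \<in> carrier_mat n n" and B: "?B \<in> carrier_mat n n" using H D by auto
  have "?A * U = (1 + \<beta>) \<cdot>\<^sub>m 1\<^sub>m n * U - \<alpha> \<cdot>\<^sub>m H * U"
    using H U by (intro minus_mult_distrib_mat) auto
  also have "\<dots> = (1 + \<beta>) \<cdot>\<^sub>m U - \<alpha> \<cdot>\<^sub>m (U * D)"
    using U by (simp add: mult_smult_assoc_mat[OF one U] mult_smult_assoc_mat[OF H U] HU)
  also have "\<dots> = U * ((1 + \<beta>) \<cdot>\<^sub>m 1\<^sub>m n) - U * (\<alpha> \<cdot>\<^sub>m D)"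
    using U by (simp add: mult_smult_distrib[OF U one] mult_smult_distrib[OF U D])
  also have "\<dots> = U * ?B" using D U by (intro mult_minus_distrib_mat[symmetric]) auto
  finally have AU: "?A * U = U * ?B" .
  have "DG \<alpha> \<beta> H * four_block_mat U (0\<^sub>m n n) (0\<^sub>m n n) U
      = four_block_mat (?A * U) ((- \<beta>) \<cdot>\<^sub>m 1\<^sub>m n * U) U (0\<^sub>m n n)"
    using H U A b
    by (simp add: DG_def mult_four_block_mat[OF A b one zero U zero zero U] mult_carrier_mat[OF b U])
  also have "\<dots> = four_block_mat (U * ?B) (U * ((- \<beta>) \<cdot>\<^sub>m 1\<^sub>m n)) U (0\<^sub>m n n)"
    using U by (simp add: AU mult_smult_assoc_mat[OF one U] mult_smult_distrib[OF U one])
  also have "\<dots> = four_block_mat U (0\<^sub>m n n) (0\<^sub>m n n) U * DG \<alpha> \<beta> D"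
    using D U B b by (simp add: DG_def mult_four_block_mat[OF U zero zero U B b one zero])
  finally show ?thesis .
qed

lemma symmetric_eigenbasis_neg_last:
  fixes H :: "real^'n::finite^'n"
  assumes sym: "transpose H = H" and neg: "neg_eig_count (to_mat H) = p"
  obtains u lam where
    "\<And>i j. i < CARD('n) \<Longrightarrow> j < CARD('n) \<Longrightarrow> inner (u i) (u j) = (if i = j then 1 else 0)"
    "\<And>j. j < CARD('n) \<Longrightarrow> H *v u j = lam j *\<^sub>R u j"
    "\<And>j. j < CARD('n) \<Longrightarrow> eigenvalue (to_mat H) (lam j)"
    "\<And>j. j < CARD('n) \<Longrightarrow> lam j < 0 \<longleftrightarrow> CARD('n) - p \<le> j"
proof -
  obtain u lam where orth: "\<And>i j. i < CARD('n) \<Longrightarrow> j < CARD('n) \<Longrightarrow> inner (u i) (u j) = (if i = j then 1 else 0)"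
    and ev: "\<And>j. j < CARD('n) \<Longrightarrow> H *v u j = lam j *\<^sub>R u j"
    and anti: "\<And>i j. i \<le> j \<Longrightarrow> j < CARD('n) \<Longrightarrow> lam j \<le> lam i"
    using sorted_orthonormal_eigenbasis[OF sym] by blast
  show ?thesis
  proof (rule that[OF orth ev])
    show "eigenvalue (to_mat H) (lam j)" if "j < CARD('n)" for j
      using eigenvalue_to_mat[OF ev[OF that]] orth[OF that that] by fastforce
    show "lam j < 0 \<longleftrightarrow> CARD('n) - p \<le> j" if "j < CARD('n)" for j
      using antitone_neg_iff[OF anti _ that] neg neg_eig_count_eigenbasis[OF orth ev] by simp
  qed
qed

lemma DG_similar_companion_blocks:
  fixes u :: "nat \<Rightarrow> real^'n::finite" and H :: "real^'n^'n"
  assumes orth: "\<And>i j. i < CARD('n) \<Longrightarrow> j < CARD('n) \<Longrightarrow> inner (u i) (u j) = (if i = j then 1 else 0)"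
    and ev: "\<And>j. j < CARD('n) \<Longrightarrow> H *v u j = lam j *\<^sub>R u j"
  obtains T T' where "T \<in> carrier_mat (2 * CARD('n)) (2 * CARD('n))"
    "T' \<in> carrier_mat (2 * CARD('n)) (2 * CARD('n))" "T' * T = 1\<^sub>m (2 * CARD('n))"
    "DG \<alpha> \<beta> (to_mat H) * T = T * companion_blocks CARD('n) (\<lambda>k. 1 + \<beta> - \<alpha> * lam k) \<beta>"
proof -
  let ?n = "CARD('n)" and ?U = "cols_mat u"
  define T where "T = four_block_mat ?U (0\<^sub>m ?n ?n) (0\<^sub>m ?n ?n) ?U"
  define T' where "T' = four_block_mat (transpose_mat ?U) (0\<^sub>m ?n ?n) (0\<^sub>m ?n ?n) (transpose_mat ?U)"
  have U: "?U \<in> carrier_mat ?n ?n" by simp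
  have "to_mat H * ?U = ?U * mat_diag ?n lam" by (rule to_mat_mult_cols_mat) (rule ev)
  hence "DG \<alpha> \<beta> (to_mat H) * T = T * DG \<alpha> \<beta> (mat_diag ?n lam)"
    unfolding T_def by (intro DG_mult_block_diag[OF _ U]) simp_all
  also have "DG \<alpha> \<beta> (mat_diag ?n lam) = companion_blocks ?n (\<lambda>k. 1 + \<beta> - \<alpha> * lam k) \<beta>"
    by (rule DG_mat_diag)
  finally show ?thesis
    using that[of T T'] U block_diag_left_inverse[OF U _ cols_mat_orthogonal[OF orth]]
    by (auto simp: T_def T'_def mult_2)
qed

lemma DG_stable_unstable_split:
  fixes H :: "real^'n::finite^'n"
  assumes sym: "transpose H = H" and p: "p \<le> CARD('n)" and neg: "neg_eig_count (to_mat H) = p"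
    and top: "\<And>\<mu>. eigenvalue (to_mat H) \<mu> \<Longrightarrow> \<mu> \<le> lam1"
    and \<alpha>: "0 < \<alpha>" and \<beta>: "-1 + \<alpha> * lam1 / 2 < \<beta>" "0 < \<beta>" "\<beta> < 1"
  obtains Vs Vu where "Vs \<in> carrier_mat (2 * CARD('n)) (2 * CARD('n) - p)"
    "Vu \<in> carrier_mat (2 * CARD('n)) p" "stable_unstable_split (DG \<alpha> \<beta> (to_mat H)) Vs Vu"
proof -
  let ?n = "CARD('n)"
  define q where "q = ?n - p"
  obtain u lam where orth: "\<And>i j. i < ?n \<Longrightarrow> j < ?n \<Longrightarrow> inner (u i) (u j) = (if i = j then 1 else 0)"
    and ev: "\<And>j. j < ?n \<Longrightarrow> H *v u j = lam j *\<^sub>R u j"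
    and eig: "\<And>j. j < ?n \<Longrightarrow> eigenvalue (to_mat H) (lam j)"
    and neg_iff: "\<And>j. j < ?n \<Longrightarrow> lam j < 0 \<longleftrightarrow> q \<le> j"
    using symmetric_eigenbasis_neg_last[OF sym neg] unfolding q_def by blast
  define t where "t k = 1 + \<beta> - \<alpha> * lam k" for k
  have small: "-(1+\<beta>) < t k \<and> t k \<le> 1+\<beta>" if "k < q" for k
  proof -
    have k: "k < ?n" using that by (simp add: q_def)
    hence "0 \<le> lam k" "lam k \<le> lam1" using neg_iff[OF k] top[OF eig[OF k]] that by simp_all
    hence "0 \<le> \<alpha> * lam k" "\<alpha> * lam k \<le> \<alpha> * lam1" using \<alpha> by simp_all
    thus ?thesis using \<beta>(1) by (simp add: t_def)
  qed
  have large: "1+\<beta> < t k" if "q \<le> k" "k < ?n" for k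
    using neg_iff[of k] that \<alpha> by (simp add: t_def mult_pos_neg)
  obtain T T' where T: "T \<in> carrier_mat (2 * ?n) (2 * ?n)" "T' \<in> carrier_mat (2 * ?n) (2 * ?n)"
    "T' * T = 1\<^sub>m (2 * ?n)" and DGT: "DG \<alpha> \<beta> (to_mat H) * T = T * companion_blocks ?n t \<beta>"
    using DG_similar_companion_blocks[OF orth ev] unfolding t_def by metis
  have "stable_unstable_split (companion_blocks ?n t \<beta>)
      (stable_basis ?n q (\<lambda>k. small_root (t k) \<beta>)) (unstable_basis ?n q (\<lambda>k. large_root (t k) \<beta>))"
    using small large by (intro companion_blocks_split[OF _ \<beta>(2,3)]) (simp_all add: q_def)
  hence "stable_unstable_split (DG \<alpha> \<beta> (to_mat H))
      (T * stable_basis ?n q (\<lambda>k. small_root (t k) \<beta>)) (T * unstable_basis ?n q (\<lambda>k. large_root (t k) \<beta>))"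
    using p by (intro stable_unstable_split_mult_left[OF T DG_carrier _ DGT]) (auto simp: q_def)
  moreover have "T * stable_basis ?n q (\<lambda>k. small_root (t k) \<beta>) \<in> carrier_mat (2 * ?n) (2 * ?n - p)"
    "T * unstable_basis ?n q (\<lambda>k. large_root (t k) \<beta>) \<in> carrier_mat (2 * ?n) p"
    using T(1) p by (auto simp: q_def)
  ultimately show ?thesis using that by blast
qed

theorem theorem2p4:
  fixes f :: "real^'n \<Rightarrow> real" and xstar :: "real^'n"
    and r p :: nat and L \<alpha> \<beta> lam1 :: real
  assumes "r \<ge> 1"
    and "Ck (r + 1) f"
    and "L-lipschitz_on UNIV (grad f)"
    and "grad f xstar = 0"
    and "1 \<le> p" and "p < CARD('n)"
    and "neg_eig_count (to_mat (hess f xstar)) = p"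
    and "eigenvalue (to_mat (hess f xstar)) lam1"
    and "\<forall>\<mu>. eigenvalue (to_mat (hess f xstar)) \<mu> \<longrightarrow> \<mu> \<le> lam1"
    and "lam1 > 0"
    and "0 < \<alpha>" and "\<alpha> < 4 / lam1"
    and "max (-1 + \<alpha> * lam1 / 2) 0 < \<beta>" and "\<beta> < 1"
  shows "\<exists>Vs Vu.
     Vs \<in> carrier_mat (2 * CARD('n)) (2 * CARD('n) - p) \<and>
     Vu \<in> carrier_mat (2 * CARD('n)) p \<and>
     invertible_mat (hcat Vs Vu) \<and>
     col_space_invariant (DG \<alpha> \<beta> (to_mat (hess f xstar))) Vs \<and>
     (\<forall>\<mu>. restr_eigenvalue (DG \<alpha> \<beta> (to_mat (hess f xstar))) Vs \<mu> \<longrightarrow> cmod \<mu> \<le> 1) \<and>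
     col_space_invariant (DG \<alpha> \<beta> (to_mat (hess f xstar))) Vu \<and>
     (\<forall>\<mu>. restr_eigenvalue (DG \<alpha> \<beta> (to_mat (hess f xstar))) Vu \<mu> \<longrightarrow> cmod \<mu> > 1)"
proof -
  have sym: "transpose (hess f xstar) = hess f xstar"
    using transpose_hess[OF assms(2)] assms(1) by simp
  have \<beta>: "-1 + \<alpha> * lam1 / 2 < \<beta>" "0 < \<beta>" using assms(13) by auto
  obtain Vs Vu where "Vs \<in> carrier_mat (2 * CARD('n)) (2 * CARD('n) - p)"
    "Vu \<in> carrier_mat (2 * CARD('n)) p" "stable_unstable_split (DG \<alpha> \<beta> (to_mat (hess f xstar))) Vs Vu"
    using DG_stable_unstable_split[OF sym less_imp_le[OF assms(6)] assms(7) assms(9)[rule_format]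
        assms(11) \<beta> assms(14)] .
  thus ?thesis unfolding stable_unstable_split_def by blast
qed

end
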